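(* Let $K$ be an algebraically closed field of characteristic $0$ and let $d,n$ be integers with $1<d<n$ and $\gcd(n,d)=1$. Then $n+d$ is $(n,d)$-reachable over $K$ if and only if $d^2-2d<n$.
   Context: For a polynomial $f(x)\in K[x]$ of degree $n$ without repeated roots, $\mathcal{C}_{f,d}$ denotes the smooth projective model of the affine curve $y^d=f(x)$; it has a unique point at infinity $O$. $\mathcal{C}_{f,d}$ is identified with its image in its Jacobian $J(\mathcal{C}_{f,d})$ via $Q\mapsto \operatorname{cl}((Q)-(O))$ (linear equivalence class), and a point $Q\in\mathcal{C}_{f,d}(K)$ has order $m$ if $\operatorname{cl}((Q)-(O))$ has order $m$ in $J(\mathcal{C}_{f,d})(K)$. An integer $m>1$ is called $(n,d)$-reachable over $K$ if there exists a monic polynomial $f(x)\in K[x]$ of degree $n$ without repeated roots such that $\mathcal{C}_{f,d}(K)$ contains a point of order $m$. *)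

theory Defs
  imports "HOL-Computational_Algebra.Polynomial"
begin

text \<open>Superelliptic curve y^d = f(x), f of degree n = degree f, gcd(n,d) = 1.
  Regular functions on the affine part form the coordinate ring K[x,y]/(y^d - f(x));
  every element has a unique representative h(x,y) = sum_{j<d} h_j(x) y^j, which we
  encode as a polynomial in y with coefficients in K[x] ('a poly poly) of y-degree < d.\<close>

definition on_curve :: "'a::field poly \<Rightarrow> nat \<Rightarrow> 'a \<Rightarrow> 'a \<Rightarrow> bool" where
  "on_curve f d a b \<longleftrightarrow> b ^ d = poly f a"

definition eval_cr :: "'a::field poly poly \<Rightarrow> 'a \<Rightarrow> 'a \<Rightarrow> 'a" where
  "eval_cr h a b = poly (map_poly (\<lambda>c. poly c a) h) b"

text \<open>Pole order at the point at infinity O: ord_O(x) = -d, ord_O(y) = -n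
  (the pole orders of the monomials x^i y^j, j<d, are pairwise distinct as gcd(n,d)=1).\<close>
definition pole_order_O :: "'a::field poly \<Rightarrow> nat \<Rightarrow> 'a poly poly \<Rightarrow> nat" where
  "pole_order_O f d h =
     Max {d * degree (coeff h j) + degree f * j | j. j \<le> degree h \<and> coeff h j \<noteq> 0}"

text \<open>k(Q) - k(O) is a principal divisor, for the affine point Q = (a,b):
  there is a nonzero regular function on the affine part whose pole order at O is k
  and whose only affine zero is Q (then its divisor is exactly k(Q) - k(O)).\<close>
definition principal_multiple :: "'a::field poly \<Rightarrow> nat \<Rightarrow> 'a \<Rightarrow> 'a \<Rightarrow> nat \<Rightarrow> bool" where
  "principal_multiple f d a b k \<longleftrightarrow>
     (\<exists>h :: 'a poly poly. h \<noteq> 0 \<and> degree h < d \<and> pole_order_O f d h = k \<and>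
        (\<forall>a' b'. on_curve f d a' b' \<and> eval_cr h a' b' = 0 \<longrightarrow> a' = a \<and> b' = b))"

text \<open>The affine point Q = (a,b) has order m in the Jacobian: cl((Q) - (O)) has order m.\<close>
definition point_order :: "'a::field poly \<Rightarrow> nat \<Rightarrow> 'a \<Rightarrow> 'a \<Rightarrow> nat \<Rightarrow> bool" where
  "point_order f d a b m \<longleftrightarrow> on_curve f d a b \<and> 0 < m \<and> principal_multiple f d a b m \<and>
     (\<forall>k. 0 < k \<and> k < m \<longrightarrow> \<not> principal_multiple f d a b k)"

text \<open>m > 1 is (n,d)-reachable over K.  (The point O itself has order 1, so only
  affine points need to be considered.)\<close>
definition reachable :: "'a::field itself \<Rightarrow> nat \<Rightarrow> nat \<Rightarrow> nat \<Rightarrow> bool" where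
  "reachable K n d m \<longleftrightarrow> 1 < m \<and>
     (\<exists>f :: 'a poly. lead_coeff f = 1 \<and> degree f = n \<and> rsquarefree f \<and>
        (\<exists>a b. point_order f d a b m))"

definition alg_closed :: "'a::field itself \<Rightarrow> bool" where
  "alg_closed K \<longleftrightarrow> (\<forall>p :: 'a poly. 0 < degree p \<longrightarrow> (\<exists>x. poly p x = 0))"

end

theory Submission
  imports Defs
begin

(* A function h with divisor k(Q) - k(O), Q = (a, b), is h0(x) + h1(x) y; since d < n, pole
   order below 2n forces this linear shape.  Its norm h0^d - (-h1)^d f then has a as its only
   root, so it is a multiple of (x - a)^m and is killed by the Euler operator (x - a) D - m.

   If k = n + d, then deg h1 = 1; let beta be its root.  Applying the operator to
   h0^d = (-h1)^d f + norm shows that (x - beta)^(d-1) divides h0^(d-1) times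
   (x - a) h0' - ((n + d)/d) h0, a nonzero polynomial of degree deg h0, so d - 1 <= deg h0 and
   d (d - 1) < n + d.

   Conversely, truncate the binomial series of (1 + x)^((n+d)/d) at degree d to get T, so that
   x^d divides (1 + x)^(n+d) - T^d; the quotient f is monic, squarefree and of degree n when
   d (d - 1) < n + d.  With z^d = -1, the function z T(x) - x y has pole order n + d and vanishes
   only at (-1, -z T(-1)).  A function of smaller pole order would be h0 + c y, and then the
   multiplicity of x = -1 in (x h0)^d - (-c z T)^d exceeds the degree of x h0 + c z T. *)

section \<open>Root multiplicities and algebraically closed fields\<close>

lemma degree_diff_eq_max:
  fixes p q :: "'a::ab_group_add poly"
  assumes "degree p \<noteq> degree q"
  shows "degree (p - q) = max (degree p) (degree q)"
proof (cases "degree p < degree q")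
  case True
  then have "degree (p + - q) = degree (- q)"
    by (intro degree_add_eq_right) simp
  with True show ?thesis
    by simp
next
  case False
  with assms have "degree (- q) < degree p"
    by simp
  then have "degree (p + - q) = degree p"
    by (rule degree_add_eq_left)
  with False show ?thesis
    by simp
qed

lemma degree_le_1_eq_pCons:
  fixes h :: "'a::zero poly"
  assumes "degree h \<le> 1"
  shows "h = [:coeff h 0, coeff h 1:]"
  using assms by (intro poly_eqI) (auto simp: coeff_pCons coeff_eq_0 split: nat.splits)

lemma linear_power_dvd_mult_imp_le_degree:
  fixes P Q :: "'a::idom poly"
  assumes "[:-a, 1:] ^ m dvd P * Q" and "poly Q a \<noteq> 0" and "P \<noteq> 0"
  shows "m \<le> degree P"
proof -
  have PQ: "P * Q \<noteq> 0"
    using assms(2,3) by auto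
  have "m \<le> order a (P * Q)"
    using assms(1) PQ order_divides by blast
  also have "\<dots> = order a P"
    using order_mult[OF PQ] assms(2) order_0I by simp
  also have "\<dots> \<le> degree P"
    using assms(3) by (rule order_degree)
  finally show ?thesis .
qed

lemma linear_power_dvd_diff_powers_imp_le_degree:
  fixes A B :: "'a::field_char_0 poly"
  assumes "[:-a, 1:] ^ m dvd A ^ d - B ^ d" and "0 < d"
    and "poly A a = poly B a" and "poly B a \<noteq> 0" and "A \<noteq> B"
  shows "m \<le> degree (A - B)"
proof -
  define S where "S = (\<Sum>i<d. B ^ (d - Suc i) * A ^ i)"
  have "A ^ d - B ^ d = (A - B) * S"
    unfolding S_def by (rule power_diff_sumr2)
  moreover have "poly S a = of_nat d * poly B a ^ (d - 1)"
  proof -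
    have "poly (B ^ (d - Suc i) * A ^ i) a = poly B a ^ (d - 1)" if "i < d" for i
      using that assms(3) by (simp add: power_add[symmetric])
    then show ?thesis
      unfolding S_def poly_sum by simp
  qed
  ultimately show ?thesis
    using assms(1,2,4,5) linear_power_dvd_mult_imp_le_degree[of a m "A - B" S] by simp
qed

lemma power_Suc_dvd_imp_dvd_pderiv:
  fixes q F :: "'a::idom poly"
  assumes "q ^ Suc m dvd F"
  shows "q ^ m dvd pderiv F"
proof -
  obtain M where F: "F = q ^ Suc m * M"
    using assms by (elim dvdE)
  have "pderiv F = q ^ m * (q * pderiv M + smult (of_nat (Suc m)) (M * pderiv q))"
    unfolding F pderiv_mult pderiv_power_Suc by (simp add: algebra_simps)
  then show ?thesis
    by simp
qed

lemma alg_closed_nth_root: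
  assumes "alg_closed TYPE('a::field)" and "0 < d"
  shows "\<exists>s::'a. s ^ d = c"
proof -
  have "0 < degree (monom 1 d - [:c:] :: 'a poly)"
    using assms(2) by (subst degree_diff_eq_max) (simp_all add: degree_monom_eq)
  then obtain s where "poly (monom 1 d - [:c:]) s = 0"
    using assms(1) unfolding alg_closed_def by blast
  then show ?thesis
    by (auto simp: poly_monom)
qed

lemma alg_closed_nontrivial_root_of_unity:
  assumes "alg_closed TYPE('a::field_char_0)" and "1 < d"
  shows "\<exists>\<zeta>::'a. \<zeta> ^ d = 1 \<and> \<zeta> \<noteq> 1"
proof -
  define P :: "'a poly" where "P = (\<Sum>i<d. monom 1 i)"
  have "degree P \<le> d - 1"
    unfolding P_def by (rule degree_sum_le) (auto simp: degree_monom_eq)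
  moreover have "coeff P (d - 1) = 1"
    unfolding P_def coeff_sum using assms(2) by (simp add: coeff_monom)
  ultimately have "0 < degree P"
    using assms(2) le_degree[of P "d - 1"] by simp
  then obtain \<zeta> where "poly P \<zeta> = 0"
    using assms(1) unfolding alg_closed_def by blast
  then have root: "(\<Sum>i<d. \<zeta> ^ i) = 0"
    unfolding P_def poly_sum by (simp add: poly_monom)
  have "\<zeta> ^ d - 1 = (\<zeta> - 1) * (\<Sum>i<d. \<zeta> ^ i)"
    by (rule power_diff_1_eq)
  moreover have "\<zeta> \<noteq> 1"
    using root assms(2) by auto
  ultimately show ?thesis
    using root by auto
qed

lemma alg_closed_single_root_imp_eq:
  fixes p :: "'a::field poly"
  assumes "alg_closed TYPE('a)" and "p \<noteq> 0" and "\<And>r. poly p r = 0 \<Longrightarrow> r = a"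
  shows "p = smult (lead_coeff p) ([:-a, 1:] ^ degree p)"
  using assms(2,3)
proof (induction "degree p" arbitrary: p)
  case 0
  then have "p = [:coeff p 0:]"
    by (metis degree_0_id)
  with 0 show ?case
    by (metis power_0 smult_one)
next
  case (Suc m)
  have "0 < degree p"
    using Suc.hyps(2) by simp
  then obtain r where "poly p r = 0"
    using assms(1) unfolding alg_closed_def by blast
  with Suc.prems(2) have "[:-a, 1:] dvd p"
    by (simp add: poly_eq_0_iff_dvd)
  then obtain q where p: "p = [:-a, 1:] * q"
    by (elim dvdE)
  with Suc.prems(1) have q: "q \<noteq> 0"
    by auto
  then have deg: "degree p = Suc (degree q)"
    unfolding p by (subst degree_mult_eq) auto
  have "\<And>r. poly q r = 0 \<Longrightarrow> r = a"
    using Suc.prems(2) p by simp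
  with Suc.hyps(1)[of q] Suc.hyps(2) deg q
  have "p = [:-a, 1:] * smult (lead_coeff q) ([:-a, 1:] ^ degree q)"
    by (simp add: p)
  also have "\<dots> = smult (lead_coeff q) ([:-a, 1:] ^ degree p)"
    unfolding deg by (simp only: mult_smult_right power_Suc)
  also have "lead_coeff q = lead_coeff p"
    unfolding p lead_coeff_mult by simp
  finally show ?case .
qed

section \<open>The Euler operator (x + c) D - e\<close>

definition euler_op :: "'a::idom \<Rightarrow> 'a \<Rightarrow> 'a poly \<Rightarrow> 'a poly" where
  "euler_op c e F = [:c, 1:] * pderiv F - smult e F"

lemma coeff_euler_op:
  "coeff (euler_op c e F) j = c * of_nat (Suc j) * coeff F (Suc j) + (of_nat j - e) * coeff F j"
  unfolding euler_op_def by (cases j) (simp_all add: coeff_pderiv algebra_simps)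

lemma euler_op_diff: "euler_op c e (F - G) = euler_op c e F - euler_op c e G"
  by (rule poly_eqI) (simp add: coeff_euler_op algebra_simps)

lemma euler_op_smult: "euler_op c e (smult k F) = smult k (euler_op c e F)"
  by (rule poly_eqI) (simp add: coeff_euler_op algebra_simps)

lemma euler_op_linear_power: "euler_op c (of_nat N) ([:c, 1:] ^ N) = 0"
proof (cases N)
  case (Suc m)
  have "pderiv [:c, 1:] = 1"
    by (simp add: pderiv_pCons)
  then have "[:c, 1:] * pderiv ([:c, 1:] ^ Suc m) = smult (of_nat (Suc m)) ([:c, 1:] ^ Suc m)"
    unfolding pderiv_power_Suc by (simp only: mult_1_right mult_smult_right power_Suc)
  then show ?thesis
    unfolding euler_op_def Suc by simp
qed (simp add: euler_op_def)

lemma euler_op_power: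
  assumes "0 < m"
  shows "euler_op c (of_nat m * e) (F ^ m) = smult (of_nat m) (F ^ (m - 1) * euler_op c e F)"
proof -
  have "[:c, 1:] * pderiv (F ^ m) = smult (of_nat m) (F ^ (m - 1) * ([:c, 1:] * pderiv F))"
    unfolding pderiv_power by (simp only: mult_smult_right mult.left_commute)
  moreover have "F ^ m = F ^ (m - 1) * F"
    using assms by (metis power_minus_mult)
  then have "smult (of_nat m * e) (F ^ m) = smult (of_nat m) (F ^ (m - 1) * smult e F)"
    by (simp only: mult_smult_right smult_smult)
  ultimately show ?thesis
    unfolding euler_op_def by (simp only: right_diff_distrib smult_diff_right)
qed

lemma degree_euler_op_le:
  fixes F :: "'a::field_char_0 poly"
  shows "degree (euler_op c e F) \<le> degree F"
proof -
  have "degree ([:c, 1:] * pderiv F) \<le> degree F"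
  proof (cases "degree F")
    case (Suc k)
    have "degree ([:c, 1:] * pderiv F) \<le> degree [:c, 1 :: 'a:] + degree (pderiv F)"
      by (rule degree_mult_le)
    then show ?thesis
      using Suc by (simp add: degree_pderiv)
  next
    case 0
    then have "pderiv F = 0"
      by (simp add: pderiv_eq_0_iff)
    then show ?thesis
      by simp
  qed
  then show ?thesis
    unfolding euler_op_def by (intro degree_diff_le) (simp_all add: degree_smult_le)
qed

lemma euler_op_nonzero:
  fixes F :: "'a::field_char_0 poly"
  assumes "F \<noteq> 0" and "e \<noteq> of_nat (degree F)"
  shows "euler_op c e F \<noteq> 0"
proof -
  have "coeff (euler_op c e F) (degree F) = (of_nat (degree F) - e) * lead_coeff F"
    by (simp add: coeff_euler_op coeff_eq_0)
  then show ?thesis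
    using assms by auto
qed

lemma linear_power_dvd_euler_op_power_imp_le_degree:
  fixes F :: "'a::field_char_0 poly"
  assumes "[:-\<beta>, 1:] ^ (m - 1) dvd euler_op c (of_nat m * e) (F ^ m)" and "0 < m"
    and "poly F \<beta> \<noteq> 0" and "e \<noteq> of_nat (degree F)"
  shows "m - 1 \<le> degree F"
proof -
  have "[:-\<beta>, 1:] ^ (m - 1) dvd smult (of_nat m) (F ^ (m - 1) * euler_op c e F)"
    using assms(1) unfolding euler_op_power[OF assms(2)] .
  then have "[:-\<beta>, 1:] ^ (m - 1) dvd euler_op c e F * F ^ (m - 1)"
    using assms(2) by (simp add: dvd_smult_iff mult.commute)
  moreover have "euler_op c e F \<noteq> 0"
    using assms(3,4) by (intro euler_op_nonzero) auto
  ultimately have "m - 1 \<le> degree (euler_op c e F)"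
    using assms(3) by (intro linear_power_dvd_mult_imp_le_degree[where Q = "F ^ (m - 1)"]) auto
  also have "\<dots> \<le> degree F"
    by (rule degree_euler_op_le)
  finally show ?thesis .
qed

lemma power_Suc_dvd_imp_dvd_euler_op:
  assumes "q ^ Suc m dvd F"
  shows "q ^ m dvd euler_op c e F"
proof -
  have "q ^ m dvd F"
    using assms by (meson dvd_trans le_imp_power_dvd le_SucI order_refl)
  then show ?thesis
    unfolding euler_op_def using power_Suc_dvd_imp_dvd_pderiv[OF assms]
    by (intro dvd_diff dvd_mult dvd_smult)
qed

lemma monom_dvd_euler_op_imp_monom_Suc_dvd:
  fixes G :: "'a::field_char_0 poly"
  assumes "monom 1 m dvd euler_op 1 e G" and "poly G 0 = 0"
  shows "monom 1 (Suc m) dvd G"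
proof -
  have "coeff G j = 0" if "j \<le> m" for j
    using that
  proof (induction j)
    case 0
    then show ?case
      using assms(2) by (simp add: poly_0_coeff_0)
  next
    case (Suc j)
    have "coeff (euler_op 1 e G) j = 0"
      using assms(1) Suc.prems by (auto simp: monom_1_dvd_iff')
    then have "of_nat (Suc j) * coeff G (Suc j) = 0"
      using Suc by (simp add: coeff_euler_op)
    then show ?case
      by (simp del: of_nat_Suc)
  qed
  then show ?thesis
    by (auto simp: monom_1_dvd_iff')
qed

section \<open>Truncated binomial series\<close>

definition trunc_binomial :: "'a::field_char_0 \<Rightarrow> nat \<Rightarrow> 'a poly" where
  "trunc_binomial r d = (\<Sum>k<d. monom (r gchoose k) k)"

lemma coeff_trunc_binomial: "coeff (trunc_binomial r d) j = (if j < d then r gchoose j else 0)"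
  unfolding trunc_binomial_def coeff_sum by (auto simp: coeff_monom)

lemma degree_trunc_binomial_le: "degree (trunc_binomial r d) \<le> d - 1"
  by (rule degree_le) (auto simp: coeff_trunc_binomial)

lemma poly_trunc_binomial_0: "0 < d \<Longrightarrow> poly (trunc_binomial r d) 0 = 1"
  by (simp add: poly_0_coeff_0 coeff_trunc_binomial)

lemma euler_op_trunc_binomial:
  "euler_op 1 r (trunc_binomial r d) = - smult (of_nat d * (r gchoose d)) (monom 1 (d - 1))"
proof (rule poly_eqI)
  fix j
  have rec: "(of_nat j - r) * (r gchoose j) = - (of_nat (Suc j) * (r gchoose Suc j))"
    using gbinomial_mult_1[of r j] by (simp add: algebra_simps)
  consider "Suc j < d" | "Suc j = d" | "d < Suc j"
    by linarith
  then show "coeff (euler_op 1 r (trunc_binomial r d)) j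
      = coeff (- smult (of_nat d * (r gchoose d)) (monom 1 (d - 1))) j"
    by cases (auto simp: coeff_euler_op coeff_trunc_binomial coeff_monom rec)
qed

lemma gbinomial_not_nat_nonzero:
  fixes r :: "'a::field_char_0"
  assumes "\<And>i. r \<noteq> of_nat i"
  shows "r gchoose k \<noteq> 0"
  using assms by (auto simp: gbinomial_prod_rev)

lemma poly_trunc_binomial_minus_1:
  fixes r :: "'a::field_char_0"
  assumes "\<And>i. r \<noteq> of_nat i" and "0 < d"
  shows "poly (trunc_binomial r d) (-1) \<noteq> 0"
proof
  assume root: "poly (trunc_binomial r d) (-1) = 0"
  have "poly (euler_op 1 r (trunc_binomial r d)) (-1) = 0"
    unfolding euler_op_def using root by simp
  then have "of_nat d * (r gchoose d) * (-1) ^ (d - 1) = 0"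
    unfolding euler_op_trunc_binomial by (simp add: poly_monom)
  with assms show False
    using gbinomial_not_nat_nonzero by auto
qed

lemma of_nat_divide_not_nat:
  assumes "0 < d" and "\<not> d dvd N"
  shows "of_nat N / of_nat d \<noteq> (of_nat i :: 'a::field_char_0)"
proof
  assume "of_nat N / of_nat d = (of_nat i :: 'a)"
  with assms(1) have "(of_nat N :: 'a) = of_nat (d * i)"
    by (simp add: field_simps)
  then have "N = d * i"
    by (simp only: of_nat_eq_iff)
  with assms show False
    by simp
qed

lemma euler_op_binomial_diff:
  fixes r :: "'a::field_char_0"
  assumes "of_nat N = of_nat d * r" and "0 < d"
  shows "euler_op 1 (of_nat N) ([:1, 1:] ^ N - trunc_binomial r d ^ d)
    = smult (of_nat d ^ 2 * (r gchoose d)) (monom 1 (d - 1) * trunc_binomial r d ^ (d - 1))"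
proof -
  have "euler_op 1 (of_nat N) (trunc_binomial r d ^ d)
      = smult (of_nat d) (trunc_binomial r d ^ (d - 1) * euler_op 1 r (trunc_binomial r d))"
    unfolding assms(1) by (rule euler_op_power[OF assms(2)])
  then show ?thesis
    unfolding euler_op_diff euler_op_linear_power euler_op_trunc_binomial
    by (simp add: power2_eq_square mult_ac)
qed

(* poly_shift d discards the coefficients below degree d; here it is an exact division by x^d. *)
definition binomial_witness :: "nat \<Rightarrow> nat \<Rightarrow> 'a::field_char_0 poly" where
  "binomial_witness N d = poly_shift d ([:1, 1:] ^ N - trunc_binomial (of_nat N / of_nat d) d ^ d)"

lemma binomial_witness_numerator_eq:
  assumes d_pos: "0 < d"
  shows "monom 1 d * binomial_witness N d
    = [:1, 1:] ^ N - trunc_binomial (of_nat N / of_nat d :: 'a::field_char_0) d ^ d"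
proof -
  define r :: 'a where "r = of_nat N / of_nat d"
  define G where "G = [:1, 1:] ^ N - trunc_binomial r d ^ d"
  have N_eq: "of_nat N = of_nat d * r"
    unfolding r_def using d_pos by simp
  have "monom 1 (Suc (d - 1)) dvd G"
  proof (rule monom_dvd_euler_op_imp_monom_Suc_dvd)
    show "monom 1 (d - 1) dvd euler_op 1 (of_nat N) G"
      unfolding G_def euler_op_binomial_diff[OF N_eq d_pos]
      by (intro dvd_smult dvd_mult2 dvd_refl)
    show "poly G 0 = 0"
      unfolding G_def using d_pos by (simp add: poly_trunc_binomial_0)
  qed
  then have "monom 1 d dvd G"
    using d_pos by simp
  then have "G = monom 1 d * poly_shift d G"
    by (intro poly_eqI) (auto simp: monom_1_dvd_iff' coeff_monom_mult coeff_poly_shift)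
  then show ?thesis
    unfolding binomial_witness_def G_def r_def by simp
qed

context
  fixes N d :: nat
  assumes d_pos: "0 < d" and not_dvd: "\<not> d dvd N"
begin

lemma poly_binomial_witness_0: "poly (binomial_witness N d :: 'a::field_char_0 poly) 0 \<noteq> 0"
proof -
  define r :: 'a where "r = of_nat N / of_nat d"
  define f :: "'a poly" where "f = binomial_witness N d"
  define G where "G = [:1, 1:] ^ N - trunc_binomial r d ^ d"
  have G_eq: "G = monom 1 d * f"
    unfolding G_def f_def r_def by (rule binomial_witness_numerator_eq[OF d_pos, symmetric])
  have N_eq: "of_nat N = of_nat d * r"
    unfolding r_def using d_pos by simp
  have "coeff (euler_op 1 (of_nat N) G) (d - 1) = of_nat d ^ 2 * (r gchoose d)"
    unfolding G_def euler_op_binomial_diff[OF N_eq d_pos] using d_pos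
    by (simp add: coeff_monom_mult poly_0_coeff_0[symmetric] poly_trunc_binomial_0)
  moreover have "coeff G (d - 1) = 0" and "coeff G d = poly f 0"
    unfolding G_eq using d_pos by (simp_all add: coeff_monom_mult poly_0_coeff_0)
  ultimately have "of_nat d * poly f 0 = of_nat d * (of_nat d * (r gchoose d))"
    using d_pos by (simp add: coeff_euler_op power2_eq_square)
  then have "poly f 0 = of_nat d * (r gchoose d)"
    using d_pos by simp
  moreover have "r gchoose d \<noteq> 0"
    unfolding r_def using d_pos not_dvd by (intro gbinomial_not_nat_nonzero of_nat_divide_not_nat)
  ultimately show ?thesis
    unfolding f_def using d_pos by simp
qed

lemma rsquarefree_binomial_witness: "rsquarefree (binomial_witness N d :: 'a::field_char_0 poly)"
  unfolding rsquarefree_roots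
proof (intro allI notI)
  fix x :: 'a
  define r :: 'a where "r = of_nat N / of_nat d"
  define f :: "'a poly" where "f = binomial_witness N d"
  define T where "T = trunc_binomial r d"
  assume "poly (binomial_witness N d) x = 0 \<and> poly (pderiv (binomial_witness N d)) x = 0"
  then have root: "poly f x = 0" and root': "poly (pderiv f) x = 0"
    unfolding f_def by simp_all
  have G_eq: "[:1, 1:] ^ N - T ^ d = monom 1 d * f"
    unfolding T_def f_def r_def by (rule binomial_witness_numerator_eq[OF d_pos, symmetric])
  have N_eq: "of_nat N = of_nat d * r"
    unfolding r_def using d_pos by simp
  have r_not_nat: "\<And>i. r \<noteq> of_nat i"
    unfolding r_def using d_pos not_dvd by (rule of_nat_divide_not_nat)
  have "poly (euler_op 1 (of_nat N) (monom 1 d * f)) x = 0"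
    unfolding euler_op_def pderiv_mult using root root' by simp
  then have "of_nat d ^ 2 * (r gchoose d) * (x ^ (d - 1) * poly T x ^ (d - 1)) = 0"
    unfolding G_eq[symmetric] T_def euler_op_binomial_diff[OF N_eq d_pos] by (simp add: poly_monom)
  then have "x = 0 \<or> poly T x = 0"
    using d_pos gbinomial_not_nat_nonzero[OF r_not_nat] by auto
  then show False
  proof
    assume "x = 0"
    with root show False
      unfolding f_def using poly_binomial_witness_0[where 'a='a] by simp
  next
    assume T_root: "poly T x = 0"
    have "poly ([:1, 1:] ^ N - T ^ d) x = 0"
      unfolding G_eq using root by simp
    with T_root d_pos have "(1 + x) ^ N = 0"
      by simp
    then have "x = -1"
      by (simp add: add_eq_0_iff)
    with T_root show False
      unfolding T_def using poly_trunc_binomial_minus_1[OF r_not_nat d_pos] by simp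
  qed
qed

lemma degree_binomial_witness:
  assumes "d * (d - 1) < N"
  shows "degree (binomial_witness N d :: 'a::field_char_0 poly) = N - d"
    and "lead_coeff (binomial_witness N d :: 'a poly) = 1"
proof -
  define T :: "'a poly" where "T = trunc_binomial (of_nat N / of_nat d) d"
  define f :: "'a poly" where "f = binomial_witness N d"
  have G_eq: "monom 1 d * f = [:1, 1:] ^ N - T ^ d"
    unfolding T_def f_def by (rule binomial_witness_numerator_eq[OF d_pos])
  have "degree (T ^ d) \<le> degree T * d"
    by (rule degree_power_le)
  also have "\<dots> \<le> (d - 1) * d"
    unfolding T_def by (intro mult_le_mono1 degree_trunc_binomial_le)
  finally have T_small: "degree (T ^ d) < degree ([:1, 1:] ^ N :: 'a poly)"
    using assms by (simp add: degree_linear_power mult.commute)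
  then have "degree ([:1, 1:] ^ N - T ^ d) = N"
    by (simp add: degree_diff_eq_max degree_linear_power)
  moreover have "lead_coeff ([:1, 1:] ^ N - T ^ d) = 1"
    using T_small lead_coeff_power[of "[:1 :: 'a, 1:]" N]
    by (simp add: degree_diff_eq_max degree_linear_power coeff_eq_0)
  moreover have "degree (monom 1 d * f) = d + degree f"
    using poly_binomial_witness_0[where 'a='a] unfolding f_def
    by (subst degree_mult_eq) (auto simp: degree_monom_eq)
  moreover have "lead_coeff (monom 1 d * f) = lead_coeff f"
    using lead_coeff_mult[of "monom 1 d" f] by (simp only: lead_coeff_monom mult_1)
  ultimately have "d + degree f = N" and "lead_coeff f = 1"
    unfolding G_eq by simp_all
  then show "degree (binomial_witness N d :: 'a poly) = N - d"
    and "lead_coeff (binomial_witness N d :: 'a poly) = 1"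
    unfolding f_def by simp_all
qed

end

section \<open>Functions of degree at most one in y\<close>

definition vanishes_only_at :: "'a::field poly \<Rightarrow> nat \<Rightarrow> 'a poly poly \<Rightarrow> 'a \<Rightarrow> 'a \<Rightarrow> bool" where
  "vanishes_only_at f d h a b \<longleftrightarrow>
     (\<forall>x y. on_curve f d x y \<and> eval_cr h x y = 0 \<longrightarrow> x = a \<and> y = b)"

lemma principal_multiple_iff:
  "principal_multiple f d a b k \<longleftrightarrow>
     (\<exists>h. h \<noteq> 0 \<and> degree h < d \<and> pole_order_O f d h = k \<and> vanishes_only_at f d h a b)"
  unfolding principal_multiple_def vanishes_only_at_def by blast

lemma eval_cr_linear: "eval_cr [:h0, h1:] x y = poly h0 x + poly h1 x * y"
  unfolding eval_cr_def by (simp add: map_poly_pCons)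

lemma eval_cr_const: "eval_cr [:c:] x y = poly c x"
  unfolding eval_cr_def by (simp add: map_poly_pCons)

lemma pole_order_O_eq_Max_image:
  "pole_order_O f d h
     = Max ((\<lambda>j. d * degree (coeff h j) + degree f * j) ` {j. j \<le> degree h \<and> coeff h j \<noteq> 0})"
  unfolding pole_order_O_def by (rule arg_cong[where f = Max]) blast

lemma pole_order_O_ge:
  assumes "j \<le> degree h" and "coeff h j \<noteq> 0"
  shows "d * degree (coeff h j) + degree f * j \<le> pole_order_O f d h"
proof -
  have "finite ((\<lambda>j. d * degree (coeff h j) + degree f * j) ` {..degree h})"
    by simp
  then show ?thesis
    unfolding pole_order_O_def using assms
    by (intro Max_ge) (auto intro: finite_subset[rotated])
qed

lemma degree_le_pole_order_O:
  assumes "h \<noteq> 0"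
  shows "degree f * degree h \<le> pole_order_O f d h"
  using pole_order_O_ge[of "degree h" h d f] assms by simp

lemma pole_order_O_less_imp_linear:
  assumes "h \<noteq> 0" and "pole_order_O f d h < 2 * degree f"
  shows "h = [:coeff h 0, coeff h 1:]"
proof (rule degree_le_1_eq_pCons)
  have "degree f * degree h < degree f * 2"
    using degree_le_pole_order_O[OF assms(1), of f d] assms(2) by linarith
  then show "degree h \<le> 1"
    by simp
qed

lemma pole_order_O_const:
  assumes "c \<noteq> 0"
  shows "pole_order_O f d [:c:] = d * degree c"
proof -
  have "{d * degree (coeff [:c:] j) + degree f * j | j. j \<le> degree [:c:] \<and> coeff [:c:] j \<noteq> 0}
      = {d * degree c}"
    using assms by auto
  then show ?thesis
    unfolding pole_order_O_def by simp
qed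

lemma pole_order_O_linear:
  assumes "h1 \<noteq> 0"
  shows "pole_order_O f d [:h0, h1:] = max (d * degree h0) (d * degree h1 + degree f)"
proof -
  have "degree [:h0, h1:] = 1"
    using assms by simp
  moreover have "{j. j \<le> 1 \<and> coeff [:h0, h1:] j \<noteq> 0} = (if h0 = 0 then {1} else {0, 1})"
    using assms by (auto simp: le_Suc_eq)
  ultimately show ?thesis
    unfolding pole_order_O_eq_Max_image by (cases "h0 = 0") simp_all
qed

lemma principal_multiple_vertical:
  assumes "0 < d" and "poly f a = 0"
  shows "principal_multiple f d a 0 d"
  unfolding principal_multiple_iff
proof (intro exI conjI)
  show "pole_order_O f d [:[:-a, 1:]:] = d"
    by (simp add: pole_order_O_const)
  show "vanishes_only_at f d [:[:-a, 1:]:] a 0"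
    unfolding vanishes_only_at_def on_curve_def using assms by (auto simp: eval_cr_const)
qed (use assms in auto)

(* The norm of h0 + h1 y from K(C) down to K(x): the product of its conjugates
   h0 + h1 zeta^i y over the d-th roots of unity zeta^i. *)
definition linear_norm :: "'a::comm_ring_1 poly \<Rightarrow> nat \<Rightarrow> 'a poly \<Rightarrow> 'a poly \<Rightarrow> 'a poly" where
  "linear_norm f d h0 h1 = h0 ^ d - (- h1) ^ d * f"

lemma linear_norm_root_imp_zero:
  fixes f :: "'a::field poly"
  assumes "alg_closed TYPE('a)" and "0 < d" and "poly (linear_norm f d h0 h1) x = 0"
  shows "\<exists>y. on_curve f d x y \<and> eval_cr [:h0, h1:] x y = 0"
proof (cases "poly h1 x = 0")
  case True
  with assms(2,3) have "poly h0 x = 0"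
    by (simp add: linear_norm_def power_0_left)
  moreover obtain y where "y ^ d = poly f x"
    using alg_closed_nth_root[OF assms(1,2)] by blast
  ultimately show ?thesis
    using True by (auto simp: on_curve_def eval_cr_linear)
next
  case False
  define y where "y = poly h0 x / (- poly h1 x)"
  have "y ^ d = poly h0 x ^ d / (- poly h1 x) ^ d"
    unfolding y_def by (rule power_divide)
  also have "\<dots> = poly f x"
    using assms(3) False by (simp add: linear_norm_def)
  finally have "y ^ d = poly f x" .
  moreover have "poly h0 x + poly h1 x * y = 0"
    unfolding y_def using False by simp
  ultimately show ?thesis
    by (auto simp: on_curve_def eval_cr_linear)
qed

lemma vanishes_only_at_linear_norm:
  fixes f :: "'a::field poly"
  assumes "alg_closed TYPE('a)" and "0 < d" and "vanishes_only_at f d [:h0, h1:] a b"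
    and "linear_norm f d h0 h1 \<noteq> 0"
  shows "linear_norm f d h0 h1
    = smult (lead_coeff (linear_norm f d h0 h1)) ([:-a, 1:] ^ degree (linear_norm f d h0 h1))"
proof (rule alg_closed_single_root_imp_eq[OF assms(1,4)])
  fix x
  assume "poly (linear_norm f d h0 h1) x = 0"
  with assms(3) show "x = a"
    using linear_norm_root_imp_zero[OF assms(1,2)] unfolding vanishes_only_at_def by blast
qed

lemma vanishes_only_at_imp_zero:
  fixes f :: "'a::field poly"
  assumes ac: "alg_closed TYPE('a)" and "0 < d" and van: "vanishes_only_at f d [:h0, h1:] a b"
    and "0 < degree (linear_norm f d h0 h1)"
  shows "poly h0 a + poly h1 a * b = 0"
proof -
  have "linear_norm f d h0 h1 \<noteq> 0"
    using assms(4) by auto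
  with assms(4) have "poly (linear_norm f d h0 h1) a = 0"
    by (subst vanishes_only_at_linear_norm[OF ac \<open>0 < d\<close> van]) (simp_all add: power_0_left)
  then obtain y where "on_curve f d a y" and "eval_cr [:h0, h1:] a y = 0"
    using linear_norm_root_imp_zero[OF ac \<open>0 < d\<close>] by blast
  moreover from van this have "y = b"
    unfolding vanishes_only_at_def by blast
  ultimately show ?thesis
    by (simp add: eval_cr_linear)
qed

lemma vanishes_only_at_euler_op_linear_norm:
  fixes f :: "'a::field poly"
  assumes "alg_closed TYPE('a)" and "0 < d" and "vanishes_only_at f d [:h0, h1:] a b"
    and "linear_norm f d h0 h1 \<noteq> 0"
  shows "euler_op (-a) (of_nat (degree (linear_norm f d h0 h1))) (linear_norm f d h0 h1) = 0"
  using vanishes_only_at_linear_norm[OF assms]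
  by (metis euler_op_linear_power euler_op_smult smult_0_right)

lemma vanishes_only_at_no_common_root:
  fixes f :: "'a::field_char_0 poly"
  assumes "alg_closed TYPE('a)" and "1 < d" and "b \<noteq> 0"
    and "vanishes_only_at f d [:h0, h1:] a b" and "poly h0 x = 0"
  shows "poly h1 x \<noteq> 0"
proof
  assume "poly h1 x = 0"
  then have zero: "eval_cr [:h0, h1:] x y = 0" for y
    using assms(5) by (simp add: eval_cr_linear)
  obtain y where y: "y ^ d = poly f x"
    using alg_closed_nth_root[OF assms(1), of d "poly f x"] assms(2) by auto
  obtain \<zeta> :: 'a where \<zeta>: "\<zeta> ^ d = 1" "\<zeta> \<noteq> 1"
    using alg_closed_nontrivial_root_of_unity[OF assms(1,2)] by blast
  have "on_curve f d x y" and "on_curve f d x (\<zeta> * y)"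
    using y \<zeta> by (simp_all add: on_curve_def power_mult_distrib)
  with assms(4) zero have "y = b" and "\<zeta> * y = b"
    unfolding vanishes_only_at_def by blast+
  then have "(\<zeta> - 1) * b = 0"
    by (simp add: algebra_simps)
  with \<zeta>(2) assms(3) show False
    by simp
qed

lemma vanishes_only_at_const_imp_degree_0:
  fixes f :: "'a::field_char_0 poly"
  assumes "alg_closed TYPE('a)" and "1 < d" and "b \<noteq> 0" and "vanishes_only_at f d [:h0:] a b"
  shows "degree h0 = 0"
proof (rule ccontr)
  assume "degree h0 \<noteq> 0"
  then obtain x where "poly h0 x = 0"
    using assms(1) unfolding alg_closed_def by blast
  with assms have "poly 0 x \<noteq> 0"
    by (intro vanishes_only_at_no_common_root[of d b f h0 0 a]) simp_all
  then show False
    by simp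
qed

lemma degree_linear_norm:
  fixes f :: "'a::field poly"
  assumes "0 < d" and "\<not> d dvd degree f" and "h1 \<noteq> 0"
  shows "degree (linear_norm f d h0 h1) = pole_order_O f d [:h0, h1:]"
proof -
  have "f \<noteq> 0"
    using assms(2) by auto
  then have "degree ((- h1) ^ d * f) = d * degree h1 + degree f"
    using assms(3) by (simp add: degree_mult_eq degree_power_eq)
  moreover have "degree (h0 ^ d) = d * degree h0"
    using assms(1) by (cases "h0 = 0") (simp_all add: degree_power_eq power_0_left)
  moreover have "d * degree h0 \<noteq> d * degree h1 + degree f"
  proof
    assume "d * degree h0 = d * degree h1 + degree f"
    then have "d dvd d * degree h1 + degree f"
      by (metis dvd_triv_left)
    with assms(2) show False
      by (simp add: dvd_add_right_iff)
  qed
  ultimately show ?thesis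
    unfolding linear_norm_def pole_order_O_linear[OF assms(3)] by (simp add: degree_diff_eq_max)
qed

section \<open>The extremal curve\<close>

lemma max_Suc_less_max_mult:
  fixes m n d :: nat
  assumes "1 < d" and "d < n"
  shows "max (m + 1) (d - 1) < max (d * m) n"
proof (cases "m \<le> 1")
  case True
  with assms have "max (m + 1) (d - 1) < n"
    by simp
  then show ?thesis
    by (simp add: less_max_iff_disj)
next
  case False
  have "2 * m \<le> d * m" and "d * 1 \<le> d * m"
    using False assms(1) by (intro mult_le_mono; simp)+
  with False assms(1) have "m + 1 < d * m" and "d - 1 < d * m"
    by linarith+
  then show ?thesis
    by (simp add: less_max_iff_disj)
qed

context
  fixes n d :: nat
  assumes one_less_d: "1 < d" and d_less_n: "d < n" and not_dvd: "\<not> d dvd n"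
begin

abbreviation T :: "'a::field_char_0 poly" where
  "T \<equiv> trunc_binomial (of_nat (n + d) / of_nat d) d"

abbreviation F :: "'a::field_char_0 poly" where
  "F \<equiv> binomial_witness (n + d) d"

lemma not_dvd_n_plus_d: "\<not> d dvd n + d"
  using not_dvd by simp

lemma monom_mult_witness: "monom 1 d * F = [:1, 1:] ^ (n + d) - (T :: 'a::field_char_0 poly) ^ d"
  using one_less_d by (intro binomial_witness_numerator_eq) simp

lemma poly_witness_eq: "x ^ d * poly F x = (1 + x) ^ (n + d) - poly T x ^ d"
proof -
  have "poly (monom 1 d * (F :: 'a poly)) x = poly ([:1, 1:] ^ (n + d) - T ^ d) x"
    by (simp only: monom_mult_witness)
  then show ?thesis
    by (simp add: poly_monom add.commute)
qed

lemma degree_witness: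
  assumes "d * (d - 1) < n + d"
  shows "degree (F :: 'a::field_char_0 poly) = n" and "lead_coeff (F :: 'a poly) = 1"
  using degree_binomial_witness[OF _ not_dvd_n_plus_d assms] one_less_d by simp_all

lemma trunc_binomial_witness_minus_1: "poly (T :: 'a::field_char_0 poly) (-1) \<noteq> 0"
  using one_less_d not_dvd_n_plus_d
  by (intro poly_trunc_binomial_minus_1 of_nat_divide_not_nat) simp_all

lemma witness_on_curve:
  fixes z :: "'a::field_char_0"
  assumes "z ^ d = -1"
  shows "on_curve F d (-1) (- z * poly T (-1))"
proof -
  have "(-1) ^ d * poly (F :: 'a poly) (-1) = - (poly T (-1) ^ d)"
    using poly_witness_eq[of "-1"] one_less_d by (simp add: power_0_left)
  then have "poly (F :: 'a poly) (-1) = (-1) ^ d * - (poly T (-1) ^ d)"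
    by (metis minus_one_mult_self mult.assoc mult_1)
  moreover have "(- z * poly T (-1)) ^ d = (-1) ^ d * z ^ d * poly T (-1) ^ d"
    by (simp only: power_mult_distrib power_minus[of z])
  ultimately show ?thesis
    unfolding on_curve_def using assms by simp
qed

lemma witness_vanishes_only_at:
  fixes z :: "'a::field_char_0"
  assumes "z ^ d = -1"
  shows "vanishes_only_at F d [:smult z T, [:0, -1:]:] (-1) (- z * poly T (-1))"
  unfolding vanishes_only_at_def
proof (intro allI impI)
  fix x y
  assume zero_at: "on_curve F d x y \<and> eval_cr [:smult z T, [:0, -1:]:] x y = 0"
  then have on: "y ^ d = poly F x"
    unfolding on_curve_def by blast
  from zero_at have zero: "z * poly T x = x * y"
    unfolding eval_cr_linear by (simp add: algebra_simps)
  have "- (poly T x ^ d) = (z * poly T x) ^ d"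
    using assms by (simp add: power_mult_distrib)
  also have "\<dots> = x ^ d * poly F x"
    unfolding zero on[symmetric] by (rule power_mult_distrib)
  finally have "(1 + x) ^ (n + d) = 0"
    unfolding poly_witness_eq by simp
  then have "x = -1"
    by (simp add: add_eq_0_iff)
  with zero show "x = -1 \<and> y = - z * poly T (-1)"
    by simp
qed

lemma witness_pole_order:
  fixes z :: "'a::field_char_0"
  assumes "d * (d - 1) < n + d"
  shows "pole_order_O F d [:smult z T, [:0, -1:]:] = n + d"
proof -
  have "degree (smult z T) \<le> d - 1"
    by (rule order.trans[OF degree_smult_le degree_trunc_binomial_le])
  then have "d * degree (smult z T) < n + d"
    using assms by (meson le_less_trans mult_le_mono2)
  then show ?thesis
    using pole_order_O_linear[of "[:0, -1:]" F d "smult z T"] degree_witness(1)[OF assms, where 'a='a]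
    by simp
qed

lemma witness_y_nonzero:
  fixes z :: "'a::field_char_0"
  assumes "z ^ d = -1"
  shows "- z * poly T (-1) \<noteq> 0"
proof -
  have "z \<noteq> 0"
    using assms one_less_d by (cases "z = 0") (simp_all add: power_0_left)
  then show ?thesis
    using trunc_binomial_witness_minus_1 by simp
qed

lemma witness_norm_identity:
  fixes z c :: "'a::field_char_0" and h0 :: "'a poly"
  assumes z: "z ^ d = -1"
  shows "([:0, 1:] * h0) ^ d - smult (- c) (smult z T) ^ d
    = monom 1 d * linear_norm F d h0 [:c:] + smult ((- c) ^ d) ([:1, 1:] ^ (n + d))"
proof -
  have "([:0, 1:] * h0) ^ d = monom 1 d * h0 ^ d"
    by (simp only: power_mult_distrib monom_altdef smult_1_left)
  moreover have "smult (- c) (smult z T) ^ d = - smult ((- c) ^ d) (T ^ d)"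
    unfolding smult_power z by simp
  ultimately have "([:0, 1:] * h0) ^ d - smult (- c) (smult z T) ^ d
      = monom 1 d * h0 ^ d + smult ((- c) ^ d) (T ^ d)"
    by simp
  also have "h0 ^ d = linear_norm F d h0 [:c:] + smult ((- c) ^ d) F"
    unfolding linear_norm_def by (simp add: poly_const_pow)
  also have "monom 1 d * (linear_norm F d h0 [:c:] + smult ((- c) ^ d) F) + smult ((- c) ^ d) (T ^ d)
      = monom 1 d * linear_norm F d h0 [:c:] + smult ((- c) ^ d) (monom 1 d * F + T ^ d)"
    by (simp add: algebra_simps smult_add_right)
  also have "monom 1 d * (F :: 'a poly) + T ^ d = [:1, 1:] ^ (n + d)"
    by (simp add: monom_mult_witness)
  finally show ?thesis .
qed

lemma degree_witness_linear_norm_const: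
  fixes c :: "'a::field_char_0" and h0 :: "'a poly"
  assumes "d * (d - 1) < n + d" and "c \<noteq> 0"
  shows "degree (linear_norm F d h0 [:c:]) = max (d * degree h0) n"
  using one_less_d not_dvd assms(2) degree_witness(1)[OF assms(1), where 'a='a]
  by (simp add: degree_linear_norm pole_order_O_linear)

lemma witness_degree_linear_norm_const_le:
  fixes z c :: "'a::field_char_0" and h0 :: "'a poly"
  assumes ac: "alg_closed TYPE('a)" and z: "z ^ d = -1" and small: "d * (d - 1) < n + d"
    and c: "c \<noteq> 0" and h0: "d * degree h0 < n + d"
    and van: "vanishes_only_at F d [:h0, [:c:]:] (-1) (- z * poly T (-1))"
  shows "degree (linear_norm F d h0 [:c:]) \<le> degree ([:0, 1:] * h0 - smult (- c) (smult z T))"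
proof -
  define b where "b = - z * poly T (-1)"
  define N where "N = linear_norm F d h0 [:c:]"
  define A where "A = [:0, 1:] * h0"
  define B where "B = smult (- c) (smult z T)"
  have degN: "degree N = max (d * degree h0) n"
    unfolding N_def using degree_witness_linear_norm_const[OF small c] .
  then have "N \<noteq> 0"
    using d_less_n by auto
  with ac one_less_d van have N_eq: "N = smult (lead_coeff N) ([:1, 1:] ^ degree N)"
    unfolding N_def using vanishes_only_at_linear_norm[of d F h0 "[:c:]" "-1"] by simp
  have h0_at: "poly h0 (-1) + c * b = 0"
    using vanishes_only_at_imp_zero[OF ac _ van] one_less_d d_less_n degN
    unfolding N_def b_def by simp
  have "z \<noteq> 0" and "b \<noteq> 0"
    using witness_y_nonzero[OF z] unfolding b_def by auto
  (* By the norm identity (x + 1)^(deg N) divides A^d - B^d, and since A(-1) = B(-1) is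
     nonzero, it divides A - B. *)
  have "[:1, 1:] ^ degree N dvd monom 1 d * N + smult ((- c) ^ d) ([:1, 1:] ^ (n + d))"
    using degN h0 d_less_n
    by (subst (2) N_eq) (intro dvd_add dvd_mult dvd_smult le_imp_power_dvd; simp)
  then have "[:- (-1), 1:] ^ degree N dvd A ^ d - B ^ d"
    unfolding A_def B_def N_def witness_norm_identity[OF z] by simp
  moreover have "poly A (-1) = c * b" and "poly B (-1) = c * b"
    unfolding A_def B_def b_def using h0_at by (simp_all add: b_def algebra_simps)
  moreover have "poly A 0 \<noteq> poly B 0"
    unfolding A_def B_def using c \<open>z \<noteq> 0\<close> one_less_d by (simp add: poly_trunc_binomial_0)
  then have "A \<noteq> B"
    by auto
  ultimately show ?thesis
    unfolding N_def[symmetric] A_def[symmetric] B_def[symmetric] using one_less_d c \<open>b \<noteq> 0\<close>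
    by (intro linear_power_dvd_diff_powers_imp_le_degree[where a = "-1"]) auto
qed

lemma witness_not_vanishes_only_at_const:
  fixes z c :: "'a::field_char_0" and h0 :: "'a poly"
  assumes ac: "alg_closed TYPE('a)" and z: "z ^ d = -1" and small: "d * (d - 1) < n + d"
    and c: "c \<noteq> 0" and h0: "d * degree h0 < n + d"
    and van: "vanishes_only_at F d [:h0, [:c:]:] (-1) (- z * poly T (-1))"
  shows False
proof -
  have "max (d * degree h0) n \<le> degree ([:0, 1:] * h0 - smult (- c) (smult z T))"
    using witness_degree_linear_norm_const_le[OF assms] degree_witness_linear_norm_const[OF small c]
    by simp
  also have "\<dots> \<le> max (degree h0 + 1) (d - 1)"
  proof (rule order.trans[OF degree_diff_le_max max.mono])
    show "degree ([:0, 1:] * h0) \<le> degree h0 + 1"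
      using degree_mult_le[of "[:0, 1:]" h0] by simp
    show "degree (smult (- c) (smult z T)) \<le> d - 1"
      by (intro order.trans[OF degree_smult_le] order.trans[OF degree_smult_le]
          degree_trunc_binomial_le)
  qed
  finally show False
    using max_Suc_less_max_mult[OF one_less_d d_less_n, of "degree h0"] by linarith
qed

lemma witness_minimal:
  fixes z :: "'a::field_char_0"
  assumes ac: "alg_closed TYPE('a)" and z: "z ^ d = -1" and small: "d * (d - 1) < n + d"
    and "0 < k" and "k < n + d"
  shows "\<not> principal_multiple F d (-1) (- z * poly T (-1)) k"
proof
  assume "principal_multiple F d (-1) (- z * poly T (-1)) k"
  then obtain h where "h \<noteq> 0" and pole: "pole_order_O F d h = k"
    and van: "vanishes_only_at F d h (-1) (- z * poly T (-1))"
    unfolding principal_multiple_iff by blast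
  have degF: "degree (F :: 'a poly) = n"
    using degree_witness(1)[OF small] .
  define h0 h1 where "h0 = coeff h 0" and "h1 = coeff h 1"
  have h: "h = [:h0, h1:]"
    unfolding h0_def h1_def using \<open>h \<noteq> 0\<close> pole \<open>k < n + d\<close> d_less_n degF
    by (intro pole_order_O_less_imp_linear[of h F d]) simp_all
  show False
  proof (cases "h1 = 0")
    case True
    with \<open>h \<noteq> 0\<close> h pole have "k = d * degree h0"
      by (simp add: pole_order_O_const)
    moreover have "degree h0 = 0"
      using van h True one_less_d witness_y_nonzero[OF z]
      by (intro vanishes_only_at_const_imp_degree_0[OF ac]) simp_all
    ultimately show False
      using \<open>0 < k\<close> by simp
  next
    case False
    with pole h degF have "k = max (d * degree h0) (d * degree h1 + n)"
      by (simp add: pole_order_O_linear)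
    with \<open>k < n + d\<close> have "degree h1 = 0" and "d * degree h0 < n + d"
      by auto
    then have "h1 = [:coeff h1 0:]"
      by (metis degree_0_id)
    with False have "coeff h1 0 \<noteq> 0"
      by auto
    show False
      using van h \<open>h1 = [:coeff h1 0:]\<close>
      by (intro witness_not_vanishes_only_at_const[OF ac z small \<open>coeff h1 0 \<noteq> 0\<close>
          \<open>d * degree h0 < n + d\<close>]) simp
  qed
qed

lemma witness_point_order:
  fixes z :: "'a::field_char_0"
  assumes ac: "alg_closed TYPE('a)" and z: "z ^ d = -1" and small: "d * (d - 1) < n + d"
  shows "point_order F d (-1) (- z * poly T (-1)) (n + d)"
  unfolding point_order_def
proof (intro conjI allI impI)
  show "on_curve F d (-1) (- z * poly T (-1))"
    using witness_on_curve[OF z] .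
  show "principal_multiple F d (-1) (- z * poly T (-1)) (n + d)"
    unfolding principal_multiple_iff
  proof (intro exI conjI)
    show "pole_order_O F d [:smult z T, [:0, -1:]:] = n + d"
      using witness_pole_order[OF small] .
    show "vanishes_only_at F d [:smult z T, [:0, -1:]:] (-1) (- z * poly T (-1))"
      using witness_vanishes_only_at[OF z] .
  qed (use one_less_d in simp_all)
  show "\<not> principal_multiple F d (-1) (- z * poly T (-1)) k" if "0 < k \<and> k < n + d" for k
    using witness_minimal[OF ac z small] that by blast
qed (use one_less_d in simp)

lemma reachable_n_plus_d:
  assumes ac: "alg_closed TYPE('a::field_char_0)" and small: "d * (d - 1) < n + d"
  shows "reachable TYPE('a) n d (n + d)"
proof -
  obtain z :: 'a where z: "z ^ d = -1"
    using alg_closed_nth_root[OF ac, of d "-1"] one_less_d by auto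
  show ?thesis
    unfolding reachable_def
  proof (intro conjI exI)
    show "lead_coeff (F :: 'a poly) = 1" and "degree (F :: 'a poly) = n"
      using degree_witness[OF small] by simp_all
    show "rsquarefree (F :: 'a poly)"
      using one_less_d not_dvd_n_plus_d by (intro rsquarefree_binomial_witness) simp_all
    show "point_order F d (-1) (- z * poly T (-1)) (n + d)"
      using witness_point_order[OF ac z small] .
  qed (use one_less_d in simp)
qed

end

section \<open>The bound for points of order n + d\<close>

lemma point_order_imp_nonzero_y:
  assumes "point_order f d a b m" and "0 < d" and "d < m"
  shows "b \<noteq> 0"
proof
  assume "b = 0"
  with assms(1,2) have "poly f a = 0"
    unfolding point_order_def on_curve_def by (simp add: power_0_left)
  with assms(2) \<open>b = 0\<close> have "principal_multiple f d a b d"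
    by (simp add: principal_multiple_vertical)
  with assms show False
    unfolding point_order_def by blast
qed

lemma vanishes_only_at_linear_degree_bound:
  fixes f :: "'a::field_char_0 poly"
  assumes ac: "alg_closed TYPE('a)" and "1 < d" and not_dvd: "\<not> d dvd degree f" and "b \<noteq> 0"
    and h1: "degree h1 = 1" and h0: "d * degree h0 < degree f + d"
    and van: "vanishes_only_at f d [:h0, h1:] a b"
  shows "d - 1 \<le> degree h0"
proof -
  define M where "M = degree f + d"
  define N where "N = linear_norm f d h0 h1"
  define e :: 'a where "e = of_nat M / of_nat d"
  have "h1 \<noteq> 0"
    using h1 by auto
  then have "degree N = M"
    unfolding N_def M_def using assms(2) not_dvd h0 h1
    by (simp add: degree_linear_norm pole_order_O_linear)
  then have "N \<noteq> 0"
    using assms(2) M_def by auto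
  then have "euler_op (-a) (of_nat M) N = 0"
    using vanishes_only_at_euler_op_linear_norm[OF ac _ van] assms(2) \<open>degree N = M\<close>
    unfolding N_def by simp
  then have euler_eq: "euler_op (-a) (of_nat M) (h0 ^ d) = euler_op (-a) (of_nat M) ((- h1) ^ d * f)"
    unfolding N_def linear_norm_def euler_op_diff by simp
  obtain \<beta> where "poly h1 \<beta> = 0"
    using ac h1 unfolding alg_closed_def by (metis zero_less_one)
  then have h0_\<beta>: "poly h0 \<beta> \<noteq> 0"
    using vanishes_only_at_no_common_root[OF ac assms(2,4) van] by blast
  have "[:-\<beta>, 1:] ^ d dvd (- h1) ^ d * f"
    using \<open>poly h1 \<beta> = 0\<close> by (intro dvd_mult2 dvd_power_same) (simp add: poly_eq_0_iff_dvd)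
  then have "[:-\<beta>, 1:] ^ Suc (d - 1) dvd (- h1) ^ d * f"
    using assms(2) by simp
  then have "[:-\<beta>, 1:] ^ (d - 1) dvd euler_op (-a) (of_nat M) (h0 ^ d)"
    unfolding euler_eq by (rule power_Suc_dvd_imp_dvd_euler_op)
  moreover have "of_nat M = of_nat d * e"
    unfolding e_def using assms(2) by simp
  ultimately have "[:-\<beta>, 1:] ^ (d - 1) dvd euler_op (-a) (of_nat d * e) (h0 ^ d)"
    by simp
  moreover have "e \<noteq> of_nat (degree h0)"
    unfolding e_def M_def using assms(2) not_dvd by (intro of_nat_divide_not_nat) auto
  ultimately show ?thesis
    using h0_\<beta> assms(2) by (intro linear_power_dvd_euler_op_power_imp_le_degree) auto
qed

lemma reachable_n_plus_d_imp_bound: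
  assumes ac: "alg_closed TYPE('a::field_char_0)" and "1 < d" and "d < n" and not_dvd: "\<not> d dvd n"
    and "reachable TYPE('a) n d (n + d)"
  shows "d * (d - 1) < n + d"
proof -
  obtain f :: "'a poly" and a b where degf: "degree f = n" and order: "point_order f d a b (n + d)"
    using assms(5) unfolding reachable_def by blast
  have "b \<noteq> 0"
    using point_order_imp_nonzero_y[OF order] assms(2,3) by simp
  obtain h where "h \<noteq> 0" and pole: "pole_order_O f d h = n + d"
    and van: "vanishes_only_at f d h a b"
    using order unfolding point_order_def principal_multiple_iff by blast
  define h0 h1 where "h0 = coeff h 0" and "h1 = coeff h 1"
  have h: "h = [:h0, h1:]"
    unfolding h0_def h1_def using \<open>h \<noteq> 0\<close> pole assms(3) degf
    by (intro pole_order_O_less_imp_linear[of h f d]) simp_all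
  have "h1 \<noteq> 0"
  proof
    assume "h1 = 0"
    with \<open>h \<noteq> 0\<close> h pole have "n + d = d * degree h0"
      by (simp add: pole_order_O_const)
    with not_dvd show False
      by (metis dvd_add_left_iff dvd_triv_left dvd_refl)
  qed
  with pole h degf have "max (d * degree h0) (d * degree h1 + n) = n + d"
    by (simp add: pole_order_O_linear)
  moreover have "d * degree h0 \<noteq> n + d"
    using not_dvd by (metis dvd_add_left_iff dvd_triv_left dvd_refl)
  ultimately have "degree h1 = 1" and "d * degree h0 < n + d"
    using assms(2) by (auto simp: max_def split: if_splits)
  then have "d - 1 \<le> degree h0"
    using not_dvd degf van[unfolded h]
    by (intro vanishes_only_at_linear_degree_bound[OF ac assms(2) _ \<open>b \<noteq> 0\<close>]) simp_all
  then have "d * (d - 1) \<le> d * degree h0"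
    by simp
  with \<open>d * degree h0 < n + d\<close> show ?thesis
    by linarith
qed

lemma mult_diff_1_less_add_iff:
  fixes n d :: nat
  assumes "0 < d"
  shows "d * (d - 1) < n + d \<longleftrightarrow> int d ^ 2 - 2 * int d < int n"
proof -
  have eq: "int (d * (d - 1)) = int d ^ 2 - int d"
    using assms by (simp add: of_nat_diff power2_eq_square algebra_simps)
  have "d * (d - 1) < n + d \<longleftrightarrow> int (d * (d - 1)) < int n + int d"
    by (simp only: of_nat_add[symmetric] of_nat_less_iff)
  also have "\<dots> \<longleftrightarrow> int d ^ 2 - 2 * int d < int n"
    unfolding eq by linarith
  finally show ?thesis .
qed

theorem mainTheorem4:
  fixes n d :: nat
  assumes "alg_closed TYPE('a::field_char_0)"
    and "1 < d" and "d < n" and "coprime n d"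
  shows "reachable TYPE('a) n d (n + d) \<longleftrightarrow> int d ^ 2 - 2 * int d < int n"
proof -
  have not_dvd: "\<not> d dvd n"
    using assms(2,4) by (metis coprime_absorb_right coprime_commute nat_dvd_1_iff_1 less_irrefl)
  have "reachable TYPE('a) n d (n + d) \<longleftrightarrow> d * (d - 1) < n + d"
    using reachable_n_plus_d[OF assms(2,3) not_dvd assms(1)]
      reachable_n_plus_d_imp_bound[OF assms(1,2,3) not_dvd] by blast
  also have "\<dots> \<longleftrightarrow> int d ^ 2 - 2 * int d < int n"
    using assms(2) by (intro mult_diff_1_less_add_iff) simp
  finally show ?thesis .
qed

end
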